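(* Let $\mathcal{X}$ be a finite set of actions, $\mathcal{Y}$ a finite set of responses, $\mathcal{H}\subseteq\mathcal{Y}^{\mathcal{X}}$, $\mathrm{cost}:\mathcal{X}\times\mathcal{Y}\to\mathbb{R}_+$. Let $f:2^{\mathcal{X}\times\mathcal{Y}}\to\mathbb{R}_+$, $Q>0$, $\eta>0$ be such that $f$ is monotone non-decreasing and submodular, $f(\emptyset)=0$, for every $S$, $f(S)\ge Q-\eta$ implies $f(S)\ge Q$, and $f$ is consistency-aware for $Q$. Let $\alpha\ge1$ and let $\mathcal{A}$ be an $\alpha$-approximate greedy algorithm for the utility function $u^f$. Then $$\mathrm{cost}(\mathcal{A})\le 2\min(g_{\mathrm{cost}},R_{\mathrm{cost}})\cdot\alpha\cdot(\log(Q/\eta)+1)\cdot\mathrm{OPT}.$$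
   Context: The true state is an unknown $h^*\in\mathcal{H}$. An interactive algorithm $\mathcal{A}$, given the set $S$ of pairs observed so far, outputs either an action $\mathcal{A}(S)\in\mathcal{X}$ (yielding $(x,h^*(x))$, added to $S$) or terminates. $S^h[\mathcal{A}]$ is the set collected until termination when $h^*=h$; $\mathrm{cost}(S)=\sum_{(x,y)\in S}\mathrm{cost}(x,y)$; $\mathrm{cost}(\mathcal{A})=\max_{h\in\mathcal{H}}\mathrm{cost}(S^h[\mathcal{A}])$; $\mathrm{OPT}$ is the minimum of $\mathrm{cost}(\mathcal{A})$ over interactive algorithms with $f(S^h[\mathcal{A}])\ge Q$ for all $h\in\mathcal{H}$ ($\infty$ if none). Version space $V(S)=\{h\in\mathcal{H}\mid\forall(x,y)\in S,\ y=h(x)\}$. $f$ is consistency-aware for $Q$ if $f(S)\ge Q$ whenever $V(S)=\emptyset$. $\delta_g(z\mid A)=g(A\cup\{z\})-g(A)$; $u^f(x,S)=\min_{h\in V(S)}\frac{\delta_{\min(f,Q)}((x,h(x))\mid S)}{\mathrm{cost}(x,h(x))}$. $\mathcal{A}$ is an $\alpha$-approximate greedy algorithm for $u$ if for all $S$: if $f(S)\ge Q$ then $\mathcal{A}$ terminates on $S$, otherwise $\mathcal{A}(S)\in\mathcal{X}$ and $u(\mathcal{A}(S),S)\ge\frac1\alpha\max_{x}u(x,S)$. Cost ratio $R_{\mathrm{cost}}=\max_x\frac{\max_y\mathrm{cost}(x,y)}{\min_y\mathrm{cost}(x,y)}$. With $\phi(x)$ the second-smallest value of the multiset $\{\mathrm{cost}(x,y)\mid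 y\in\mathcal{Y}\}$, $\phi_{\min}=\min_x\phi(x)$, $c_{\max}=\max_{(x,y)}\mathrm{cost}(x,y)$, the global second-smallest cost ratio is $g_{\mathrm{cost}}=c_{\max}/\phi_{\min}$. *)

theory Defs
  imports Complex_Main "HOL-Library.Multiset" "HOL-Library.Extended_Real"
begin

(* An interactive algorithm: given the observed set S, either returns Some x
   (the next action) or None (terminate). *)
type_synonym ('x,'y) ialg = "('x \<times> 'y) set \<Rightarrow> 'x option"

primrec run :: "('x,'y) ialg \<Rightarrow> ('x \<Rightarrow> 'y) \<Rightarrow> nat \<Rightarrow> ('x \<times> 'y) set" where
  "run A h 0 = {}"
| "run A h (Suc n) = (case A (run A h n) of None \<Rightarrow> run A h n
                        | Some x \<Rightarrow> insert (x, h x) (run A h n))"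

definition terminates :: "('x,'y) ialg \<Rightarrow> ('x \<Rightarrow> 'y) \<Rightarrow> bool" where
  "terminates A h \<longleftrightarrow> (\<exists>n. A (run A h n) = None)"

definition final_set :: "('x,'y) ialg \<Rightarrow> ('x \<Rightarrow> 'y) \<Rightarrow> ('x \<times> 'y) set" where
  "final_set A h = run A h (LEAST n. A (run A h n) = None)"

definition set_cost :: "('x \<Rightarrow> 'y \<Rightarrow> real) \<Rightarrow> ('x \<times> 'y) set \<Rightarrow> real" where
  "set_cost cost S = (\<Sum>(x,y)\<in>S. cost x y)"

definition alg_cost :: "('x \<Rightarrow> 'y) set \<Rightarrow> ('x \<Rightarrow> 'y \<Rightarrow> real) \<Rightarrow> ('x,'y) ialg \<Rightarrow> ereal" where
  "alg_cost H cost A = (SUP h\<in>H. (if terminates A h then ereal (set_cost cost (final_set A h)) else \<infinity>))"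

(* OPT: infimum of cost(A) over algorithms achieving f >= Q for every h (= \<infinity> if none) *)
definition OPT :: "('x \<Rightarrow> 'y) set \<Rightarrow> ('x \<Rightarrow> 'y \<Rightarrow> real) \<Rightarrow> (('x \<times> 'y) set \<Rightarrow> real) \<Rightarrow> real \<Rightarrow> ereal" where
  "OPT H cost f Q = (INF A\<in>{A. \<forall>h\<in>H. terminates A h \<and> f (final_set A h) \<ge> Q}. alg_cost H cost A)"

definition version_space :: "('x \<Rightarrow> 'y) set \<Rightarrow> ('x \<times> 'y) set \<Rightarrow> ('x \<Rightarrow> 'y) set" where
  "version_space H S = {h\<in>H. \<forall>(x,y)\<in>S. y = h x}"

definition consistency_aware :: "('x \<Rightarrow> 'y) set \<Rightarrow> (('x \<times> 'y) set \<Rightarrow> real) \<Rightarrow> real \<Rightarrow> bool" where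
  "consistency_aware H f Q \<longleftrightarrow> (\<forall>S. version_space H S = {} \<longrightarrow> f S \<ge> Q)"

definition delta :: "('a set \<Rightarrow> real) \<Rightarrow> 'a \<Rightarrow> 'a set \<Rightarrow> real" where
  "delta g z A = g (A \<union> {z}) - g A"

definition monotone_setfun :: "('a set \<Rightarrow> real) \<Rightarrow> bool" where
  "monotone_setfun f \<longleftrightarrow> (\<forall>A B. A \<subseteq> B \<longrightarrow> f A \<le> f B)"

definition submodular :: "('a set \<Rightarrow> real) \<Rightarrow> bool" where
  "submodular f \<longleftrightarrow> (\<forall>A B z. A \<subseteq> B \<longrightarrow> z \<notin> B \<longrightarrow> delta f z A \<ge> delta f z B)"

definition utility :: "('x::finite \<Rightarrow> 'y::finite) set \<Rightarrow> ('x \<Rightarrow> 'y \<Rightarrow> real) \<Rightarrow> (('x \<times> 'y) set \<Rightarrow> real)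
                       \<Rightarrow> real \<Rightarrow> 'x \<Rightarrow> ('x \<times> 'y) set \<Rightarrow> real" where
  "utility H cost f Q x S =
     Min ((\<lambda>h. delta (\<lambda>T. min (f T) Q) (x, h x) S / cost x (h x)) ` version_space H S)"

definition approx_greedy :: "real \<Rightarrow> (('x::finite) \<Rightarrow> ('x \<times> 'y) set \<Rightarrow> real)
                       \<Rightarrow> (('x \<times> 'y) set \<Rightarrow> real) \<Rightarrow> real \<Rightarrow> ('x,'y) ialg \<Rightarrow> bool" where
  "approx_greedy \<alpha> u f Q A \<longleftrightarrow>
     (\<forall>S. (f S \<ge> Q \<longrightarrow> A S = None) \<and>
          (\<not> f S \<ge> Q \<longrightarrow> (\<exists>x. A S = Some x \<and> u x S \<ge> (1/\<alpha>) * Max (range (\<lambda>x'. u x' S)))))"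

definition R_cost :: "('x::finite \<Rightarrow> 'y::finite \<Rightarrow> real) \<Rightarrow> real" where
  "R_cost cost = Max (range (\<lambda>x. Max (range (cost x)) / Min (range (cost x))))"

definition second_smallest_cost :: "('x \<Rightarrow> 'y::finite \<Rightarrow> real) \<Rightarrow> 'x \<Rightarrow> real" where
  "second_smallest_cost cost x = sorted_list_of_multiset (image_mset (cost x) (mset_set UNIV)) ! 1"

definition g_cost :: "('x::finite \<Rightarrow> 'y::finite \<Rightarrow> real) \<Rightarrow> real" where
  "g_cost cost = Max (range (\<lambda>(x,y). cost x y)) / Min (range (second_smallest_cost cost))"

end

theory Submission
  imports Defs
begin

text \<open>Fix a feasible algorithm \<open>B\<close> whose cost is at most \<open>C\<close> on every hypothesis. For an observed
  set \<open>S\<close> with \<open>f S < Q\<close>, answer every action \<open>x\<close> by a hypothesis of the version space that attains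
  the utility \<open>u(x,S)\<close>, and run \<open>B\<close> against these answers. Either some hypothesis stays consistent
  with the whole run, which is then a genuine run of \<open>B\<close>, or the version space becomes empty after a
  step whose answer differs from that of a consistent hypothesis; swapping the answer of this last
  step costs at most a factor \<open>R_cost\<close>, and at most an additive \<open>g_cost \<cdot> C\<close> since a budget below
  the second-smallest cost forces every answer along \<open>B\<close>. In both cases a set of cost at most
  \<open>2 min(g_cost, R_cost) C\<close> raises \<open>min(f,Q)\<close> from \<open>f S\<close> to \<open>Q\<close>, so by submodularity
  \<open>Q - f S \<le> max\<^sub>x u(x,S) \<cdot> 2 min(g_cost, R_cost) C\<close>. Hence an \<open>\<alpha>\<close>-approximate greedy step of cost
  \<open>c\<close> shrinks the gap \<open>Q - f\<close> by the factor \<open>1 - c/D\<close>, \<open>D = 2 \<alpha> min(g_cost, R_cost) C\<close>; the gap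
  starts at \<open>Q\<close> and stays above \<open>\<eta>\<close> until the last step, so the total cost is at most
  \<open>D (ln(Q/\<eta>) + 1)\<close>.\<close>

subsection \<open>Cost ratios\<close>

lemma second_smallest_cost_le_max:
  fixes cost :: "'x \<Rightarrow> 'y::finite \<Rightarrow> real"
  assumes "y1 \<noteq> y2"
  shows "second_smallest_cost cost x \<le> max (cost x y1) (cost x y2)"
proof (rule ccontr)
  define m where "m = max (cost x y1) (cost x y2)"
  define M where "M = image_mset (cost x) (mset_set (UNIV::'y set))"
  define L where "L = sorted_list_of_multiset M"
  assume "\<not> ?thesis"
  hence gt: "L ! 1 > m" unfolding second_smallest_cost_def L_def M_def m_def by (simp add: not_le)
  have "size (filter_mset (\<lambda>v. v \<le> m) M) = card {y. cost x y \<le> m}"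
    unfolding M_def by (simp add: filter_mset_image_mset filter_mset_mset_set)
  moreover have "card {y. cost x y \<le> m} \<ge> card {y1, y2}"
    by (rule card_mono) (auto simp: m_def)
  ultimately have two_below: "size (filter_mset (\<lambda>v. v \<le> m) M) \<ge> 2" using assms by simp
  have "size (filter_mset (\<lambda>v. v \<le> m) M) = length (filter (\<lambda>v. v \<le> m) L)"
    unfolding L_def by (metis mset_filter mset_sorted_list_of_multiset size_mset)
  also have "length L \<ge> 2" using two_below
    by (metis L_def mset_sorted_list_of_multiset multiset_filter_subset order_trans size_mset size_mset_mono)
  then obtain a b L' where L: "L = a # b # L'" by (cases L; cases "tl L"; auto)
  have "sorted L" unfolding L_def by simp
  hence "\<forall>v\<in>set (b # L'). v > m" using gt L by auto
  hence "filter (\<lambda>v. v \<le> m) (b # L') = []" by (simp add: filter_empty_conv) (meson not_le)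
  hence "length (filter (\<lambda>v. v \<le> m) L) \<le> 1" using L by simp
  finally show False using two_below by simp
qed

lemma second_smallest_cost_in_range:
  fixes cost :: "'x \<Rightarrow> 'y::finite \<Rightarrow> real"
  assumes "card (UNIV::'y set) \<ge> 2"
  shows "\<exists>y. second_smallest_cost cost x = cost x y"
proof -
  define L where "L = sorted_list_of_multiset (image_mset (cost x) (mset_set (UNIV::'y set)))"
  have "length L = card (UNIV::'y set)" unfolding L_def
    by (metis mset_sorted_list_of_multiset size_image_mset size_mset size_mset_set)
  hence "L ! 1 \<in> set L" using assms by simp
  thus ?thesis unfolding second_smallest_cost_def L_def[symmetric] by (auto simp: L_def)
qed

definition max_cost :: "('x::finite \<Rightarrow> 'y::finite \<Rightarrow> real) \<Rightarrow> real" where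
  "max_cost cost = Max (range (\<lambda>(x,y). cost x y))"

definition min_second_smallest_cost :: "('x::finite \<Rightarrow> 'y::finite \<Rightarrow> real) \<Rightarrow> real" where
  "min_second_smallest_cost cost = Min (range (second_smallest_cost cost))"

lemma cost_le_max_cost: "cost x y \<le> max_cost cost"
  unfolding max_cost_def by (rule Max_ge) (auto intro: image_eqI[of _ _ "(x,y)"])

lemma min_second_smallest_cost_le: "min_second_smallest_cost cost \<le> second_smallest_cost cost x"
  unfolding min_second_smallest_cost_def by simp

lemma min_second_smallest_cost_in_range:
  fixes cost :: "'x::finite \<Rightarrow> 'y::finite \<Rightarrow> real"
  assumes "card (UNIV::'y set) \<ge> 2"
  shows "\<exists>x y. min_second_smallest_cost cost = cost x y"
proof -
  have "min_second_smallest_cost cost \<in> range (second_smallest_cost cost)"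
    unfolding min_second_smallest_cost_def by (rule Min_in) auto
  thus ?thesis using second_smallest_cost_in_range[OF assms, of cost] by fastforce
qed

lemma g_cost_ge_1:
  fixes cost :: "'x::finite \<Rightarrow> 'y::finite \<Rightarrow> real"
  assumes "\<And>x y. cost x y > 0" and "card (UNIV::'y set) \<ge> 2"
  shows "g_cost cost \<ge> 1"
proof -
  obtain x y where "min_second_smallest_cost cost = cost x y"
    using min_second_smallest_cost_in_range[OF assms(2)] by blast
  with assms(1)[of x y] cost_le_max_cost[of cost x y] show ?thesis
    unfolding g_cost_def max_cost_def[symmetric] min_second_smallest_cost_def[symmetric] by simp
qed

lemma max_cost_eq_g_cost_mult:
  fixes cost :: "'x::finite \<Rightarrow> 'y::finite \<Rightarrow> real"
  assumes "\<And>x y. cost x y > 0" and "card (UNIV::'y set) \<ge> 2"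
  shows "max_cost cost = g_cost cost * min_second_smallest_cost cost"
proof -
  obtain x y where "min_second_smallest_cost cost = cost x y"
    using min_second_smallest_cost_in_range[OF assms(2)] by blast
  with assms(1)[of x y] show ?thesis
    unfolding g_cost_def max_cost_def[symmetric] min_second_smallest_cost_def[symmetric] by simp
qed

lemma cost_le_R_cost_mult:
  fixes cost :: "'x::finite \<Rightarrow> 'y::finite \<Rightarrow> real"
  assumes pos: "\<And>x y. cost x y > 0"
  shows "cost x y1 \<le> R_cost cost * cost x y2"
proof -
  have "Min (range (cost x)) > 0" using pos by (simp add: Min_gr_iff)
  moreover have "cost x y1 \<le> Max (range (cost x))" "Min (range (cost x)) \<le> cost x y2" by simp_all
  ultimately have "cost x y1 / cost x y2 \<le> Max (range (cost x)) / Min (range (cost x))"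
    using pos by (meson frac_le less_le_trans less_imp_le)
  also have "\<dots> \<le> R_cost cost" unfolding R_cost_def by simp
  finally show ?thesis using pos[of x y2] by (simp add: divide_le_eq)
qed

lemma R_cost_ge_1:
  fixes cost :: "'x::finite \<Rightarrow> 'y::finite \<Rightarrow> real"
  assumes "\<And>x y. cost x y > 0"
  shows "R_cost cost \<ge> 1"
proof -
  have "cost x y \<le> R_cost cost * cost x y" for x y by (rule cost_le_R_cost_mult[OF assms])
  thus ?thesis using assms[of undefined undefined] by (simp add: mult_le_cancel_right1)
qed

lemma two_min_cost_ratios_ge_1:
  fixes cost :: "'x::finite \<Rightarrow> 'y::finite \<Rightarrow> real"
  assumes "\<And>x y. cost x y > 0" and "card (UNIV::'y set) \<ge> 2"
  shows "2 * min (g_cost cost) (R_cost cost) \<ge> 1"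
  using g_cost_ge_1[of cost, OF assms] R_cost_ge_1[of cost, OF assms(1)] by simp

lemma cost_after_swapped_answer_le:
  fixes cost :: "'x::finite \<Rightarrow> 'y::finite \<Rightarrow> real"
  assumes pos: "\<And>x y. cost x y > 0" and card_Y: "card (UNIV::'y set) \<ge> 2"
    and c: "0 \<le> c" "c + cost x y \<le> C"
    and budget: "min_second_smallest_cost cost \<le> C"
  shows "c + cost x y' \<le> 2 * min (g_cost cost) (R_cost cost) * C"
proof -
  have R1: "R_cost cost \<ge> 1" by (rule R_cost_ge_1[of cost, OF pos])
  have g1: "g_cost cost \<ge> 1" by (rule g_cost_ge_1[of cost, OF pos card_Y])
  have C0: "C \<ge> 0" using c pos[of x y] by linarith
  have "c + cost x y' \<le> R_cost cost * c + R_cost cost * cost x y"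
    using cost_le_R_cost_mult[of cost x y' y, OF pos] mult_right_mono[OF R1 c(1)] by simp
  also have "\<dots> \<le> R_cost cost * C" using c R1 by (simp add: distrib_left[symmetric])
  also have "\<dots> \<le> 2 * R_cost cost * C" using R1 C0 by (simp add: mult_right_mono)
  finally have R_bound: "c + cost x y' \<le> 2 * R_cost cost * C" .
  have "cost x y' \<le> g_cost cost * min_second_smallest_cost cost"
    using cost_le_max_cost[of cost x y'] max_cost_eq_g_cost_mult[of cost, OF pos card_Y] by simp
  also have "\<dots> \<le> g_cost cost * C" using g1 budget by (simp add: mult_left_mono)
  finally have "c + cost x y' \<le> C + g_cost cost * C" using c pos[of x y] by linarith
  also have "\<dots> \<le> 2 * g_cost cost * C" using mult_right_mono[OF g1 C0] by (simp add: mult.commute)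
  finally show ?thesis using R_bound by (simp add: min_def)
qed

subsection \<open>Runs of interactive algorithms\<close>

lemma run_mono: "m \<le> n \<Longrightarrow> run A h m \<subseteq> run A h n"
proof (induction n)
  case (Suc n)
  have "run A h n \<subseteq> run A h (Suc n)" by (auto split: option.splits)
  with Suc show ?case by (cases "m = Suc n") auto
qed simp

lemma run_consistent: "(x, y) \<in> run A h n \<Longrightarrow> y = h x"
  by (induction n) (auto split: option.splits)

lemma run_stable: "A (run A h n) = None \<Longrightarrow> run A h (n + k) = run A h n"
  by (induction k) auto

lemma run_subset_final_set:
  assumes "terminates A h"
  shows "run A h k \<subseteq> final_set A h"
proof -
  define N where "N = (LEAST n. A (run A h n) = None)"
  have stop: "A (run A h N) = None"
    using assms unfolding terminates_def N_def by (rule LeastI_ex)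
  show ?thesis
  proof (cases "k \<le> N")
    case True then show ?thesis unfolding final_set_def N_def[symmetric] by (rule run_mono)
  next
    case False
    then have "run A h k = run A h (N + (k - N))" by simp
    also have "\<dots> = run A h N" by (rule run_stable[of A h N, OF stop])
    finally show ?thesis unfolding final_set_def N_def by simp
  qed
qed

lemma run_eq_if_consistent:
  assumes "\<forall>(x,y)\<in>run A r n. y = h x" and "k \<le> n"
  shows "run A h k = run A r k"
  using assms(2)
proof (induction k)
  case (Suc k)
  hence IH: "run A h k = run A r k" by simp
  show ?case
  proof (cases "A (run A r k)")
    case (Some x)
    have "(x, r x) \<in> run A r n" using Some run_mono[OF Suc.prems, of A r] by auto
    hence "h x = r x" using assms(1) by auto
    then show ?thesis using IH Some by simp
  qed (use IH in simp)
qed simp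

lemma final_set_eq_run_if_consistent:
  assumes "\<And>n. \<forall>(x,y)\<in>run A r n. y = h x"
  shows "\<exists>N. final_set A h = run A r N"
  unfolding final_set_def using run_eq_if_consistent[OF assms] by blast

lemma terminates_if_new_each_step:
  fixes A :: "('x::finite, 'y::finite) ialg"
  assumes new: "\<And>n x. A (run A h n) = Some x \<Longrightarrow> (x, h x) \<notin> run A h n"
  shows "terminates A h"
proof (rule ccontr)
  assume "\<not> terminates A h"
  hence running: "A (run A h n) \<noteq> None" for n unfolding terminates_def by simp
  have card_run: "card (run A h n) = n" for n
  proof (induction n)
    case (Suc n)
    obtain x where "A (run A h n) = Some x" using running by blast
    with new[OF this] Suc show ?case by simp
  qed simp
  have "card (run A h (Suc (card (UNIV :: ('x \<times> 'y) set)))) \<le> card (UNIV :: ('x \<times> 'y) set)"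
    by (rule card_mono) auto
  thus False unfolding card_run by simp
qed

lemma set_cost_nonneg: "(\<And>x y. cost x y > 0) \<Longrightarrow> set_cost cost S \<ge> 0"
  unfolding set_cost_def by (rule sum_nonneg) (auto intro: less_imp_le)

lemma set_cost_mono:
  fixes S T :: "('x::finite \<times> 'y::finite) set"
  shows "(\<And>x y. cost x y > 0) \<Longrightarrow> S \<subseteq> T \<Longrightarrow> set_cost cost S \<le> set_cost cost T"
  unfolding set_cost_def by (rule sum_mono2) (auto intro: less_imp_le)

lemma set_cost_insert:
  fixes S :: "('x::finite \<times> 'y::finite) set"
  shows "(x, y) \<notin> S \<Longrightarrow> set_cost cost (insert (x, y) S) = set_cost cost S + cost x y"
  unfolding set_cost_def by simp

lemma cost_le_set_cost:
  fixes S :: "('x::finite \<times> 'y::finite) set"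
  assumes "\<And>x y. cost x y > 0" and "(x, y) \<in> S"
  shows "cost x y \<le> set_cost cost S"
  unfolding set_cost_def using assms
  by (intro member_le_sum[of "(x, y)" _ "\<lambda>(a,b). cost a b", simplified]) (auto intro: less_imp_le)

lemma set_cost_pos:
  fixes S :: "('x::finite \<times> 'y::finite) set"
  assumes "\<And>x y. cost x y > 0" and "S \<noteq> {}"
  shows "set_cost cost S > 0"
  unfolding set_cost_def using assms by (intro sum_pos) auto

lemma run_cost_le:
  fixes A :: "('x::finite, 'y::finite) ialg"
  assumes "\<And>x y. cost x y > 0" and "terminates A h"
  shows "set_cost cost (run A h n) \<le> set_cost cost (final_set A h)"
  using assms by (intro set_cost_mono run_subset_final_set)

subsection \<open>Monotone submodular set functions\<close>

lemma delta_nonneg: "monotone_setfun g \<Longrightarrow> delta g z S \<ge> 0"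
  unfolding delta_def monotone_setfun_def by (simp add: subset_insertI)

lemma monotone_setfun_min_const: "monotone_setfun f \<Longrightarrow> monotone_setfun (\<lambda>T. min (f T) Q)"
  unfolding monotone_setfun_def by (meson min.mono order_refl)

lemma submodular_min_const:
  assumes mono: "monotone_setfun f" and submod: "submodular f"
  shows "submodular (\<lambda>T. min (f T) Q)"
  unfolding submodular_def delta_def
proof (intro allI impI)
  fix A B :: "'a set" and z assume AB: "A \<subseteq> B" "z \<notin> B"
  have f_le: "\<And>X Y. X \<subseteq> Y \<Longrightarrow> f X \<le> f Y" using mono unfolding monotone_setfun_def by blast
  have "f A \<le> f B" "f A \<le> f (A \<union> {z})" "f B \<le> f (B \<union> {z})"
    using AB by (auto intro!: f_le)
  moreover have "f (A \<union> {z}) - f A \<ge> f (B \<union> {z}) - f B"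
    using submod AB unfolding submodular_def delta_def by auto
  ultimately show "min (f (B \<union> {z})) Q - min (f B) Q \<le> min (f (A \<union> {z})) Q - min (f A) Q"
    by (simp add: min_def)
qed

lemma diff_le_sum_delta:
  assumes mono: "monotone_setfun g" and submod: "submodular g" and "finite T"
  shows "g (S \<union> T) - g S \<le> (\<Sum>e\<in>T. delta g e S)"
  using \<open>finite T\<close>
proof (induction T rule: finite_induct)
  case (insert e T)
  have "g (S \<union> insert e T) - g (S \<union> T) \<le> delta g e S"
  proof (cases "e \<in> S \<union> T")
    case True
    thus ?thesis using delta_nonneg[OF mono] by (simp add: insert_absorb)
  next
    case False
    hence "delta g e (S \<union> T) \<le> delta g e S" using submod unfolding submodular_def by auto
    moreover have "S \<union> insert e T = (S \<union> T) \<union> {e}" by auto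
    ultimately show ?thesis unfolding delta_def by simp
  qed
  thus ?case using insert by simp
qed simp

subsection \<open>Version spaces and utility\<close>

lemma version_space_antimono: "S1 \<subseteq> S2 \<Longrightarrow> version_space H S2 \<subseteq> version_space H S1"
  unfolding version_space_def by auto

lemma utility_nonneg:
  fixes H :: "('x::finite \<Rightarrow> 'y::finite) set"
  assumes "\<And>x y. cost x y > 0" and "monotone_setfun f" and "version_space H S \<noteq> {}"
  shows "utility H cost f Q x S \<ge> 0"
  unfolding utility_def using assms delta_nonneg[OF monotone_setfun_min_const[OF assms(2)]]
  by (subst Min_ge_iff) (auto intro!: divide_nonneg_pos)

lemma utility_mult_cost_le_delta:
  fixes H :: "('x::finite \<Rightarrow> 'y::finite) set"
  assumes "\<And>x y. cost x y > 0" and "h \<in> version_space H S"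
  shows "utility H cost f Q x S * cost x (h x) \<le> delta (\<lambda>T. min (f T) Q) (x, h x) S"
proof -
  have "utility H cost f Q x S \<le> delta (\<lambda>T. min (f T) Q) (x, h x) S / cost x (h x)"
    unfolding utility_def using assms(2) by simp
  thus ?thesis using assms(1)[of x "h x"] by (simp add: le_divide_eq)
qed

lemma utility_attained:
  fixes H :: "('x::finite \<Rightarrow> 'y::finite) set"
  assumes "\<And>x y. cost x y > 0" and "version_space H S \<noteq> {}"
  shows "\<exists>h\<in>version_space H S.
           utility H cost f Q x S * cost x (h x) = delta (\<lambda>T. min (f T) Q) (x, h x) S"
proof -
  have "utility H cost f Q x S
          \<in> (\<lambda>h. delta (\<lambda>T. min (f T) Q) (x, h x) S / cost x (h x)) ` version_space H S"
    unfolding utility_def using assms(2) by (intro Min_in) auto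
  then obtain h where "h \<in> version_space H S"
    and "utility H cost f Q x S = delta (\<lambda>T. min (f T) Q) (x, h x) S / cost x (h x)" by blast
  thus ?thesis using assms(1)[of x "h x"] by (intro bexI[of _ h]) auto
qed

lemma antimono_chain_stabilizes:
  fixes V :: "nat \<Rightarrow> 'a set"
  assumes anti: "\<And>m n. m \<le> n \<Longrightarrow> V n \<subseteq> V m" and "finite (V 0)"
  shows "\<exists>n0. \<forall>n. V n0 \<subseteq> V n"
proof -
  obtain n0 where least: "\<And>n. card (V n0) \<le> card (V n)"
    using ex_has_least_nat[of "\<lambda>_. True" 0 "\<lambda>n. card (V n)"] by auto
  have "V n0 \<subseteq> V n" for n
  proof (cases "n \<le> n0")
    case False
    hence sub: "V n \<subseteq> V n0" by (intro anti) simp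
    have "finite (V n0)" using anti[of 0 n0] \<open>finite (V 0)\<close> finite_subset by auto
    hence "card (V n) = card (V n0)" using sub least[of n] card_mono[of "V n0" "V n"] by linarith
    hence "V n = V n0" using sub \<open>finite (V n0)\<close> by (intro card_subset_eq) auto
    thus ?thesis by simp
  qed (rule anti)
  thus ?thesis by blast
qed

subsection \<open>Running a feasible algorithm against adversarial answers\<close>

lemma runs_eq_if_budget_lt_min_second_smallest_cost:
  fixes B :: "('x::finite, 'y::finite) ialg"
  assumes pos: "\<And>x y. cost x y > 0"
    and budget: "\<And>h. h \<in> H \<Longrightarrow> terminates B h \<and> set_cost cost (final_set B h) \<le> C"
    and below: "C < min_second_smallest_cost cost"
    and "h1 \<in> H" "h2 \<in> H"
  shows "run B h1 n = run B h2 n"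
proof (induction n)
  case (Suc n)
  show ?case
  proof (cases "B (run B h1 n)")
    case (Some x)
    have cheap: "cost x (h x) < second_smallest_cost cost x"
      if "h \<in> H" and "B (run B h n) = Some x" for h
    proof -
      have "cost x (h x) \<le> set_cost cost (run B h (Suc n))"
        using that(2) by (intro cost_le_set_cost[OF pos]) simp
      also have "\<dots> \<le> set_cost cost (final_set B h)"
        using budget[OF that(1)] by (intro run_cost_le[OF pos]) simp
      also have "\<dots> \<le> C" using budget[OF that(1)] by simp
      finally show ?thesis using below min_second_smallest_cost_le[of cost x] by linarith
    qed
    have "h1 x = h2 x"
    proof (rule ccontr)
      assume "h1 x \<noteq> h2 x"
      from second_smallest_cost_le_max[OF this, of cost x] cheap[OF \<open>h1 \<in> H\<close> Some]
        cheap[OF \<open>h2 \<in> H\<close>] Some Suc.IH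
      show False by (simp add: max_def split: if_splits)
    qed
    thus ?thesis using Some Suc.IH by simp
  qed (use Suc.IH in simp)
qed simp

lemma swapped_last_step_cost_le:
  fixes B :: "('x::finite, 'y::finite) ialg"
  assumes pos: "\<And>x y. cost x y > 0" and card_Y: "card (UNIV :: 'y set) \<ge> 2"
    and budget: "\<And>h. h \<in> H \<Longrightarrow> terminates B h \<and> set_cost cost (final_set B h) \<le> C"
    and "h \<in> H" "g \<in> H"
    and agree: "run B h m = run B r m"
    and step: "B (run B r m) = Some x"
    and "g x = r x" "h x \<noteq> r x"
  shows "set_cost cost (run B r (Suc m)) \<le> 2 * min (g_cost cost) (R_cost cost) * C"
proof -
  define T where "T = run B r m"
  have r_new: "(x, r x) \<notin> T"
    using run_consistent[of x "r x" B h m] agree \<open>h x \<noteq> r x\<close> unfolding T_def by auto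
  have h_new: "(x, h x) \<notin> T"
    using run_consistent[of x "h x" B r m] \<open>h x \<noteq> r x\<close> unfolding T_def by auto
  have h_step: "run B h (Suc m) = insert (x, h x) T" using agree step unfolding T_def by simp
  have "set_cost cost T + cost x (h x) = set_cost cost (run B h (Suc m))"
    unfolding h_step by (simp add: set_cost_insert[OF h_new])
  also have "\<dots> \<le> set_cost cost (final_set B h)"
    using budget[OF \<open>h \<in> H\<close>] by (intro run_cost_le[OF pos]) simp
  also have "\<dots> \<le> C" using budget[OF \<open>h \<in> H\<close>] by simp
  finally have h_cost: "set_cost cost T + cost x (h x) \<le> C" .
  have "min_second_smallest_cost cost \<le> C"
  proof (rule ccontr)
    assume "\<not> ?thesis"
    hence "run B g (Suc m) = run B h (Suc m)"
      using runs_eq_if_budget_lt_min_second_smallest_cost[OF pos budget _ \<open>g \<in> H\<close> \<open>h \<in> H\<close>]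
      by (meson not_le)
    hence "h x = g x" using h_step run_consistent[of x "h x" B g "Suc m"] by auto
    thus False using \<open>g x = r x\<close> \<open>h x \<noteq> r x\<close> by simp
  qed
  moreover have "set_cost cost (run B r (Suc m)) = set_cost cost T + cost x (r x)"
    using step r_new unfolding T_def by (simp add: set_cost_insert)
  ultimately show ?thesis
    using cost_after_swapped_answer_le[where cost = cost and y' = "r x",
        OF pos card_Y set_cost_nonneg[of cost, OF pos] h_cost]
    by simp
qed

lemma run_reaches_goal_within_budget:
  fixes H :: "('x::finite \<Rightarrow> 'y::finite) set" and B :: "('x, 'y) ialg"
  assumes pos: "\<And>x y. cost x y > 0" and card_Y: "card (UNIV :: 'y set) \<ge> 2"
    and f_mono: "monotone_setfun f" and f_ca: "consistency_aware H f Q"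
    and B: "\<And>h. h \<in> H \<Longrightarrow>
              terminates B h \<and> f (final_set B h) \<ge> Q \<and> set_cost cost (final_set B h) \<le> C"
    and nonempty: "version_space H S \<noteq> {}"
    and realized: "\<And>x. \<exists>g\<in>H. g x = r x"
  shows "\<exists>N. f (S \<union> run B r N) \<ge> Q
             \<and> set_cost cost (run B r N) \<le> 2 * min (g_cost cost) (R_cost cost) * C"
proof -
  define Vs where "Vs n = version_space H (S \<union> run B r n)" for n
  have anti: "m \<le> n \<Longrightarrow> Vs n \<subseteq> Vs m" for m n
    unfolding Vs_def by (intro version_space_antimono) (use run_mono in blast)
  have Vs_H: "Vs n \<subseteq> H" for n unfolding Vs_def version_space_def by auto
  show ?thesis
  proof (cases "\<forall>n. Vs n \<noteq> {}")
    case True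
    obtain n0 where "\<forall>n. Vs n0 \<subseteq> Vs n" using antimono_chain_stabilizes[of Vs, OF anti] by auto
    moreover obtain h where "h \<in> Vs n0" using True by auto
    ultimately have h_Vs: "h \<in> Vs n" for n by blast
    hence "h \<in> H" using Vs_H by blast
    have "\<forall>(x,y)\<in>run B r n. y = h x" for n
      using h_Vs[of n] unfolding Vs_def version_space_def by auto
    then obtain N where final: "final_set B h = run B r N"
      using final_set_eq_run_if_consistent[of B r h] by blast
    have "Q \<le> f (run B r N)" using B[OF \<open>h \<in> H\<close>] final by simp
    also have "\<dots> \<le> f (S \<union> run B r N)" using f_mono unfolding monotone_setfun_def by simp
    finally have goal: "Q \<le> f (S \<union> run B r N)" .
    have "1 \<le> 2 * min (g_cost cost) (R_cost cost)"
      by (rule two_min_cost_ratios_ge_1[of cost, OF pos card_Y])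
    moreover have "0 \<le> C"
      using B[OF \<open>h \<in> H\<close>] set_cost_nonneg[of cost "final_set B h", OF pos] by linarith
    ultimately have "set_cost cost (run B r N) \<le> 2 * min (g_cost cost) (R_cost cost) * C"
      using B[OF \<open>h \<in> H\<close>] final mult_right_mono[of 1 _ C] by fastforce
    with goal show ?thesis by blast
  next
    case False
    define n1 where "n1 = (LEAST n. Vs n = {})"
    have empty: "Vs n1 = {}" unfolding n1_def using False by (metis (mono_tags) LeastI)
    moreover have "Vs 0 \<noteq> {}" unfolding Vs_def using nonempty by simp
    ultimately obtain m where m: "n1 = Suc m" by (cases n1) auto
    have "Vs m \<noteq> {}" using not_less_Least[of m "\<lambda>n. Vs n = {}"] unfolding n1_def[symmetric] m by auto
    then obtain h where h: "h \<in> Vs m" by auto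
    hence "h \<in> H" using Vs_H by auto
    have agree: "run B h m = run B r m"
      using h run_eq_if_consistent[of B r m h m] unfolding Vs_def version_space_def by auto
    obtain x where step: "B (run B r m) = Some x"
      using empty h unfolding m Vs_def by (cases "B (run B r m)") auto
    have "h x \<noteq> r x"
    proof
      assume "h x = r x"
      hence "h \<in> Vs (Suc m)" using h step unfolding Vs_def version_space_def by auto
      thus False using empty m by simp
    qed
    obtain g where "g \<in> H" "g x = r x" using realized by blast
    have "Q \<le> f (S \<union> run B r (Suc m))"
      using f_ca empty unfolding consistency_aware_def Vs_def m by auto
    moreover have "set_cost cost (run B r (Suc m)) \<le> 2 * min (g_cost cost) (R_cost cost) * C"
      using swapped_last_step_cost_le[where cost = cost, OF pos card_Y _ \<open>h \<in> H\<close> \<open>g \<in> H\<close> agree step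
          \<open>g x = r x\<close> \<open>h x \<noteq> r x\<close>] B by blast
    ultimately show ?thesis by blast
  qed
qed

lemma gap_le_max_utility_mult_budget:
  fixes H :: "('x::finite \<Rightarrow> 'y::finite) set" and B :: "('x, 'y) ialg"
  assumes pos: "\<And>x y. cost x y > 0" and card_Y: "card (UNIV :: 'y set) \<ge> 2"
    and f_mono: "monotone_setfun f" and f_submod: "submodular f"
    and f_ca: "consistency_aware H f Q"
    and B: "\<And>h. h \<in> H \<Longrightarrow>
              terminates B h \<and> f (final_set B h) \<ge> Q \<and> set_cost cost (final_set B h) \<le> C"
    and below: "f S < Q"
  shows "Q - f S \<le> Max (range (\<lambda>x. utility H cost f Q x S)) * (2 * min (g_cost cost) (R_cost cost) * C)"
proof -
  define fQ where "fQ T = min (f T) Q" for T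
  define u where "u x = utility H cost f Q x S" for x
  define M where "M = Max (range u)"
  have nonempty: "version_space H S \<noteq> {}" using f_ca below unfolding consistency_aware_def by force
  have "\<forall>x. \<exists>g. g \<in> version_space H S \<and> u x * cost x (g x) = delta fQ (x, g x) S"
    using utility_attained[where cost = cost, OF pos nonempty] unfolding u_def fQ_def by blast
  then obtain h where h: "\<And>x. h x \<in> version_space H S \<and> u x * cost x (h x x) = delta fQ (x, h x x) S"
    by metis
  have "0 \<le> u x" for x unfolding u_def by (rule utility_nonneg[OF pos f_mono nonempty])
  hence M_nonneg: "0 \<le> M" unfolding M_def by (simp add: Max_ge_iff)
  define r where "r x = h x x" for x
  have "\<exists>g\<in>H. g x = r x" for x using h[of x] unfolding r_def version_space_def by auto
  then obtain N where goal: "Q \<le> f (S \<union> run B r N)"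
    and cheap: "set_cost cost (run B r N) \<le> 2 * min (g_cost cost) (R_cost cost) * C"
    using run_reaches_goal_within_budget[where cost = cost, OF pos card_Y f_mono f_ca B nonempty] by blast
  have "Q - f S = fQ (S \<union> run B r N) - fQ S" unfolding fQ_def using goal below by simp
  also have "\<dots> \<le> (\<Sum>e\<in>run B r N. delta fQ e S)"
    unfolding fQ_def by (intro diff_le_sum_delta monotone_setfun_min_const submodular_min_const f_mono f_submod) simp
  also have "\<dots> = (\<Sum>(x,y)\<in>run B r N. u x * cost x y)"
  proof (rule sum.cong[OF refl], clarify)
    fix x y assume "(x, y) \<in> run B r N"
    hence "y = r x" by (rule run_consistent)
    thus "delta fQ (x, y) S = u x * cost x y" using h[of x] unfolding r_def by simp
  qed
  also have "\<dots> \<le> (\<Sum>(x,y)\<in>run B r N. M * cost x y)"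
    unfolding M_def using pos by (intro sum_mono) (simp add: case_prod_beta less_imp_le mult_right_mono)
  also have "\<dots> = M * set_cost cost (run B r N)"
    unfolding set_cost_def by (simp add: sum_distrib_left case_prod_beta)
  also have "\<dots> \<le> M * (2 * min (g_cost cost) (R_cost cost) * C)"
    using cheap M_nonneg by (rule mult_left_mono)
  finally show ?thesis unfolding M_def u_def by (simp add: mult.assoc)
qed

subsection \<open>Analysis of the approximate greedy algorithm\<close>

lemma greedy_step_gain:
  fixes H :: "('x::finite \<Rightarrow> 'y::finite) set"
  assumes pos: "\<And>x y. cost x y > 0" and "\<alpha> \<ge> 1"
    and greedy: "approx_greedy \<alpha> (utility H cost f Q) f Q A"
    and gap: "Q - f S \<le> Max (range (\<lambda>x. utility H cost f Q x S)) * K" and "K \<ge> 0"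
    and below: "f S < Q" and h: "h \<in> version_space H S"
  obtains x where "A S = Some x"
    and "cost x (h x) * (Q - f S) \<le> \<alpha> * K * (min (f (insert (x, h x) S)) Q - f S)"
proof -
  define u where "u x = utility H cost f Q x S" for x
  obtain x where Ax: "A S = Some x" and ux: "(1/\<alpha>) * Max (range u) \<le> u x"
    using greedy below unfolding approx_greedy_def u_def by (meson not_le)
  have "Q - f S \<le> Max (range u) * K" using gap unfolding u_def .
  also have "\<dots> \<le> \<alpha> * u x * K"
    using ux \<open>\<alpha> \<ge> 1\<close> \<open>K \<ge> 0\<close> by (intro mult_right_mono) (simp_all add: field_simps)
  finally have "cost x (h x) * (Q - f S) \<le> \<alpha> * K * (u x * cost x (h x))"
    using pos[of x "h x"] by (simp add: mult_left_mono mult.commute mult.left_commute)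
  also have "\<dots> \<le> \<alpha> * K * delta (\<lambda>T. min (f T) Q) (x, h x) S"
    using utility_mult_cost_le_delta[OF pos h] \<open>\<alpha> \<ge> 1\<close> \<open>K \<ge> 0\<close> unfolding u_def
    by (intro mult_left_mono) simp_all
  also have "\<dots> = \<alpha> * K * (min (f (insert (x, h x) S)) Q - f S)"
    unfolding delta_def using below by simp
  finally show ?thesis using that Ax by blast
qed

lemma greedy_run_step:
  fixes H :: "('x::finite \<Rightarrow> 'y::finite) set" and A :: "('x, 'y) ialg"
  assumes pos: "\<And>x y. cost x y > 0" and "\<alpha> \<ge> 1"
    and greedy: "approx_greedy \<alpha> (utility H cost f Q) f Q A"
    and gap: "\<And>S. f S < Q \<Longrightarrow> Q - f S \<le> Max (range (\<lambda>x. utility H cost f Q x S)) * K"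
    and "K > 0" and "h \<in> H" and Ax: "A (run A h n) = Some x"
  shows "(x, h x) \<notin> run A h n"
    and "cost x (h x) * (Q - f (run A h n)) \<le> \<alpha> * K * (f (run A h (Suc n)) - f (run A h n))"
    and "cost x (h x) \<le> \<alpha> * K"
proof -
  define S where "S = run A h n"
  have below: "f S < Q"
    using greedy Ax unfolding approx_greedy_def S_def by (metis not_le option.distinct(1))
  have "h \<in> version_space H S"
    using \<open>h \<in> H\<close> run_consistent unfolding version_space_def S_def by fastforce
  then obtain x' where "A S = Some x'"
    and gain: "cost x' (h x') * (Q - f S) \<le> \<alpha> * K * (min (f (insert (x', h x') S)) Q - f S)"
    using greedy_step_gain[OF pos \<open>\<alpha> \<ge> 1\<close> greedy gap[OF below] _ below] \<open>K > 0\<close> by auto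
  hence gain: "cost x (h x) * (Q - f S) \<le> \<alpha> * K * (min (f (insert (x, h x) S)) Q - f S)"
    using Ax unfolding S_def by simp
  have "\<alpha> * K > 0" using \<open>\<alpha> \<ge> 1\<close> \<open>K > 0\<close> by simp
  have "0 < cost x (h x) * (Q - f S)" using pos[of x "h x"] below by simp
  thus "(x, h x) \<notin> run A h n"
    using gain \<open>\<alpha> * K > 0\<close> below unfolding S_def by (auto simp: insert_absorb)
  have "\<alpha> * K * (min (f (insert (x, h x) S)) Q - f S) \<le> \<alpha> * K * (f (insert (x, h x) S) - f S)"
    using \<open>\<alpha> * K > 0\<close> by (intro mult_left_mono) simp_all
  with gain show "cost x (h x) * (Q - f (run A h n)) \<le> \<alpha> * K * (f (run A h (Suc n)) - f (run A h n))"
    using Ax unfolding S_def by simp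
  have "\<alpha> * K * (min (f (insert (x, h x) S)) Q - f S) \<le> \<alpha> * K * (Q - f S)"
    using \<open>\<alpha> * K > 0\<close> by (intro mult_left_mono) simp_all
  with gain have "cost x (h x) * (Q - f S) \<le> \<alpha> * K * (Q - f S)" by linarith
  thus "cost x (h x) \<le> \<alpha> * K" using below by simp
qed

lemma le_mult_ln_decrease:
  fixes G G' c D :: real
  assumes "0 < G'" "0 < G" "0 < D" and shrink: "G' \<le> G * (1 - c / D)"
  shows "c \<le> D * (ln G - ln G')"
proof -
  define t where "t = 1 - c / D"
  have "0 < G * t" using assms unfolding t_def by linarith
  hence "t > 0" using \<open>0 < G\<close> by (simp add: zero_less_mult_iff)
  have "ln G' \<le> ln (G * t)" using assms \<open>t > 0\<close> unfolding t_def by simp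
  also have "\<dots> = ln G + ln t" using \<open>0 < G\<close> \<open>t > 0\<close> by (simp add: ln_mult)
  also have "\<dots> \<le> ln G - c / D" using ln_le_minus_one[OF \<open>t > 0\<close>] unfolding t_def by simp
  finally show ?thesis using \<open>0 < D\<close> by (simp add: field_simps)
qed

text \<open>The potential \<open>ln (Q - f)\<close> drops by at least \<open>c / (\<alpha> K)\<close> with every step of cost \<open>c\<close>, and
  stays above \<open>ln \<eta>\<close> before the last step.\<close>
lemma greedy_cost_le:
  fixes H :: "('x::finite \<Rightarrow> 'y::finite) set" and A :: "('x, 'y) ialg"
  assumes pos: "\<And>x y. cost x y > 0" and "Q > 0" and "\<eta> > 0"
    and f_empty: "f {} = 0" and f_gap: "\<And>S. f S \<ge> Q - \<eta> \<Longrightarrow> f S \<ge> Q"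
    and "\<alpha> \<ge> 1" and greedy: "approx_greedy \<alpha> (utility H cost f Q) f Q A"
    and gap: "\<And>S. f S < Q \<Longrightarrow> Q - f S \<le> Max (range (\<lambda>x. utility H cost f Q x S)) * K"
    and "K > 0" and "h \<in> H"
  shows "terminates A h \<and> set_cost cost (final_set A h) \<le> \<alpha> * K * (ln (Q / \<eta>) + 1)"
proof -
  define D where "D = \<alpha> * K"
  define G where "G n = Q - f (run A h n)" for n
  have "D > 0" unfolding D_def using \<open>\<alpha> \<ge> 1\<close> \<open>K > 0\<close> by simp
  have step: "(x, h x) \<notin> run A h n
      \<and> cost x (h x) * G n \<le> D * (f (run A h (Suc n)) - f (run A h n)) \<and> cost x (h x) \<le> D"
    if "A (run A h n) = Some x" for n x
    using greedy_run_step[OF pos \<open>\<alpha> \<ge> 1\<close> greedy gap \<open>K > 0\<close> \<open>h \<in> H\<close>] that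
    unfolding G_def D_def by blast
  have "terminates A h" by (rule terminates_if_new_each_step) (use step in blast)
  define N where "N = (LEAST n. A (run A h n) = None)"
  have "A (run A h 0) \<noteq> None"
    using greedy f_empty \<open>Q > 0\<close> unfolding approx_greedy_def by force
  moreover have "A (run A h N) = None"
    using \<open>terminates A h\<close> unfolding N_def terminates_def by (rule LeastI_ex)
  ultimately obtain M where N: "N = Suc M" by (cases N) auto
  have running: "\<exists>x. A (run A h j) = Some x" if "j \<le> M" for j
    using not_less_Least[of j "\<lambda>n. A (run A h n) = None"] that unfolding N_def[symmetric] N by auto
  have G_gt: "\<eta> < G j" if "j \<le> M" for j
  proof -
    have "\<not> Q \<le> f (run A h j)"
      using running[OF that] greedy unfolding approx_greedy_def by fastforce
    thus ?thesis using f_gap[of "run A h j"] unfolding G_def by linarith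
  qed
  have potential: "set_cost cost (run A h n) \<le> D * (ln Q - ln (G n))" if "n \<le> M" for n
    using that
  proof (induction n)
    case 0
    show ?case unfolding G_def using f_empty by (simp add: set_cost_def)
  next
    case (Suc n)
    obtain x where Ax: "A (run A h n) = Some x" using running[of n] Suc.prems by auto
    have "G (Suc n) \<le> G n * (1 - cost x (h x) / D)"
      using step[OF Ax] \<open>D > 0\<close> unfolding G_def by (simp add: field_simps)
    hence "cost x (h x) \<le> D * (ln (G n) - ln (G (Suc n)))"
      using G_gt[of n] G_gt[OF Suc.prems] \<open>\<eta> > 0\<close> \<open>D > 0\<close> Suc.prems by (intro le_mult_ln_decrease) auto
    thus ?case using Suc step[OF Ax] Ax by (simp add: set_cost_insert algebra_simps)
  qed
  obtain x where Ax: "A (run A h M) = Some x" using running by blast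
  have "ln Q - ln (G M) \<le> ln (Q / \<eta>)"
    using G_gt[of M] \<open>\<eta> > 0\<close> \<open>Q > 0\<close> by (simp add: ln_div)
  hence "D * (ln Q - ln (G M)) \<le> D * ln (Q / \<eta>)" using \<open>D > 0\<close> by simp
  hence "set_cost cost (run A h M) \<le> D * ln (Q / \<eta>)" using potential[of M] by simp
  moreover have "set_cost cost (final_set A h) = set_cost cost (run A h M) + cost x (h x)"
    using step[OF Ax] Ax unfolding final_set_def N_def[symmetric] N by (simp add: set_cost_insert)
  ultimately have "set_cost cost (final_set A h) \<le> D * (ln (Q / \<eta>) + 1)"
    using step[OF Ax] by (simp add: distrib_left)
  with \<open>terminates A h\<close> show ?thesis unfolding D_def by simp
qed

subsection \<open>Comparison with an optimal algorithm\<close>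

lemma gap_lt_threshold:
  fixes f :: "'a set \<Rightarrow> real"
  assumes "f {} = 0" and "Q > 0" and "\<And>S. f S \<ge> Q - \<eta> \<Longrightarrow> f S \<ge> Q"
  shows "\<eta> < Q"
proof (rule ccontr)
  assume "\<not> \<eta> < Q"
  hence "f {} \<ge> Q - \<eta>" using assms(1) by linarith
  hence "f {} \<ge> Q" by (rule assms(3))
  thus False using assms(1,2) by simp
qed

lemma le_ereal_mult_INF:
  fixes a :: ereal and g :: "'a \<Rightarrow> ereal"
  assumes "K > 0" and le: "\<And>b. b \<in> F \<Longrightarrow> a \<le> ereal K * g b"
  shows "a \<le> ereal K * (INF b\<in>F. g b)"
proof -
  have cancel: "ereal c * (ereal (1 / c) * z) = z" if "c \<noteq> 0" for c and z :: ereal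
  proof -
    have "ereal c * ereal (1 / c) = 1" using that by (simp add: one_ereal_def)
    thus ?thesis by (simp add: mult.assoc[symmetric])
  qed
  have "ereal (1 / K) * a \<le> (INF b\<in>F. g b)"
  proof (rule INF_greatest)
    fix b assume "b \<in> F"
    hence "ereal (1 / K) * a \<le> ereal (1 / K) * (ereal K * g b)"
      using le \<open>K > 0\<close> by (intro ereal_mult_left_mono) auto
    also have "\<dots> = g b" using cancel[of "1 / K"] \<open>K > 0\<close> by simp
    finally show "ereal (1 / K) * a \<le> g b" .
  qed
  hence "ereal K * (ereal (1 / K) * a) \<le> ereal K * (INF b\<in>F. g b)"
    using \<open>K > 0\<close> by (intro ereal_mult_left_mono) auto
  thus ?thesis using cancel[of K a] \<open>K > 0\<close> by simp
qed

lemma alg_cost_le_mult_alg_cost: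
  fixes H :: "('x::finite \<Rightarrow> 'y::finite) set"
    and cost :: "'x \<Rightarrow> 'y \<Rightarrow> real"
    and f :: "('x \<times> 'y) set \<Rightarrow> real"
    and A B :: "('x,'y) ialg"
  assumes card_Y: "card (UNIV :: 'y set) \<ge> 2"
    and pos: "\<And>x y. cost x y > 0"
    and "Q > 0" and "\<eta> > 0"
    and f_mono: "monotone_setfun f" and f_submod: "submodular f"
    and f_empty: "f {} = 0"
    and f_gap: "\<And>S. f S \<ge> Q - \<eta> \<Longrightarrow> f S \<ge> Q"
    and f_ca: "consistency_aware H f Q"
    and "\<alpha> \<ge> 1" and greedy: "approx_greedy \<alpha> (utility H cost f Q) f Q A"
    and B: "\<forall>h\<in>H. terminates B h \<and> f (final_set B h) \<ge> Q"
  shows "alg_cost H cost A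
           \<le> ereal (2 * min (g_cost cost) (R_cost cost) * \<alpha> * (ln (Q / \<eta>) + 1)) * alg_cost H cost B"
proof -
  define \<kappa> where "\<kappa> = 2 * min (g_cost cost) (R_cost cost)"
  define C where "C = Max ((\<lambda>h. set_cost cost (final_set B h)) ` H)"
  have "H \<noteq> {}"
  proof
    assume "H = {}"
    hence "version_space H {} = {}" unfolding version_space_def by simp
    thus False using f_ca f_empty \<open>Q > 0\<close> unfolding consistency_aware_def by force
  qed
  hence "C \<in> (\<lambda>h. set_cost cost (final_set B h)) ` H" unfolding C_def by (intro Max_in) auto
  then obtain h0 where "h0 \<in> H" and C: "C = set_cost cost (final_set B h0)" by blast
  have B_le_C: "set_cost cost (final_set B h) \<le> C" if "h \<in> H" for h
    unfolding C_def using that by simp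
  have "final_set B h0 \<noteq> {}" using B \<open>h0 \<in> H\<close> f_empty \<open>Q > 0\<close> by force
  hence "C > 0" unfolding C by (rule set_cost_pos[OF pos])
  moreover have "\<kappa> \<ge> 1"
    unfolding \<kappa>_def by (rule two_min_cost_ratios_ge_1[of cost, OF pos card_Y])
  ultimately have "\<kappa> * C > 0" by simp
  have gap: "Q - f S \<le> Max (range (\<lambda>x. utility H cost f Q x S)) * (\<kappa> * C)" if "f S < Q" for S
    unfolding \<kappa>_def using B B_le_C
    by (intro gap_le_max_utility_mult_budget[where cost = cost, OF pos card_Y f_mono f_submod f_ca _ that]) auto
  have "terminates A h \<and> set_cost cost (final_set A h) \<le> \<alpha> * (\<kappa> * C) * (ln (Q / \<eta>) + 1)"
    if "h \<in> H" for h
    using greedy_cost_le[where cost = cost, OF pos \<open>Q > 0\<close> \<open>\<eta> > 0\<close> f_empty f_gap \<open>\<alpha> \<ge> 1\<close> greedy gap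
        \<open>\<kappa> * C > 0\<close> that] .
  hence "alg_cost H cost A \<le> ereal (\<kappa> * \<alpha> * (ln (Q / \<eta>) + 1)) * ereal C"
    unfolding alg_cost_def by (intro SUP_least) (auto simp: mult_ac)
  also have "\<dots> \<le> ereal (\<kappa> * \<alpha> * (ln (Q / \<eta>) + 1)) * alg_cost H cost B"
  proof (rule ereal_mult_left_mono)
    show "ereal C \<le> alg_cost H cost B"
      unfolding alg_cost_def C using B \<open>h0 \<in> H\<close> by (intro SUP_upper2[of h0]) auto
    have "\<eta> < Q" by (rule gap_lt_threshold[where f = f, OF f_empty \<open>Q > 0\<close> f_gap])
    hence "ln (Q / \<eta>) > 0" using \<open>\<eta> > 0\<close> by simp
    thus "0 \<le> ereal (\<kappa> * \<alpha> * (ln (Q / \<eta>) + 1))"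
      using \<open>\<kappa> \<ge> 1\<close> \<open>\<alpha> \<ge> 1\<close> \<open>\<eta> > 0\<close> by simp
  qed
  finally show ?thesis unfolding \<kappa>_def .
qed

theorem theorem3:
  fixes H :: "('x::finite \<Rightarrow> 'y::finite) set"
    and cost :: "'x \<Rightarrow> 'y \<Rightarrow> real"
    and f :: "('x \<times> 'y) set \<Rightarrow> real"
    and Q \<eta> \<alpha> :: real
    and A :: "('x,'y) ialg"
  assumes card_Y: "card (UNIV :: 'y set) \<ge> 2"
    and cost_pos: "\<And>x y. cost x y > 0"
    and f_nonneg: "\<And>S. f S \<ge> 0"
    and Q_pos: "Q > 0" and eta_pos: "\<eta> > 0"
    and f_mono: "monotone_setfun f"
    and f_submod: "submodular f"
    and f_empty: "f {} = 0"
    and f_gap: "\<And>S. f S \<ge> Q - \<eta> \<Longrightarrow> f S \<ge> Q"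
    and f_ca: "consistency_aware H f Q"
    and alpha_ge: "\<alpha> \<ge> 1"
    and greedy: "approx_greedy \<alpha> (utility H cost f Q) f Q A"
  shows "alg_cost H cost A
           \<le> ereal (2 * min (g_cost cost) (R_cost cost) * \<alpha> * (ln (Q / \<eta>) + 1)) * OPT H cost f Q"
proof -
  define K where "K = 2 * min (g_cost cost) (R_cost cost) * \<alpha> * (ln (Q / \<eta>) + 1)"
  have "\<eta> < Q" by (rule gap_lt_threshold[where f = f, OF f_empty Q_pos f_gap])
  hence "ln (Q / \<eta>) > 0" using eta_pos by simp
  moreover have "2 * min (g_cost cost) (R_cost cost) \<ge> 1"
    by (rule two_min_cost_ratios_ge_1[of cost, OF cost_pos card_Y])
  ultimately have "K > 0" unfolding K_def using alpha_ge by (intro mult_pos_pos) linarith+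
  show ?thesis
    unfolding OPT_def K_def[symmetric]
    by (rule le_ereal_mult_INF[OF \<open>K > 0\<close>], unfold K_def)
      (auto intro: alg_cost_le_mult_alg_cost[OF card_Y cost_pos Q_pos eta_pos f_mono f_submod
          f_empty f_gap f_ca alpha_ge greedy])
qed

end
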